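(* Let $\Omega\subset\mathbb R^2$ be open and let $g\in W^{1,2}_{\mathrm{loc}}(\Omega,\mathbb C)$ satisfy $\bar\partial g=\mu\partial g+\nu\overline{\partial g}$ in $\Omega$, where $\mu,\nu\in L^\infty(\Omega,\mathbb C)$ satisfy $|\mu|+|\nu|\le\kappa<1$ a.e. in $\Omega$. Define $$B_{\mu,\nu}=\frac{1}{\Delta_1}\left(\begin{bmatrix}|1-\mu|^2&-2\Im(\mu-\nu)\\-2\Im(\mu+\nu)&|1+\mu|^2\end{bmatrix}-|\nu|^2 I\right),\quad \Delta_1=|1+\nu|^2-|\mu|^2,$$ $$\widetilde B_{\mu,\nu}=\frac{1}{\Delta_2}\left(\begin{bmatrix}|1-\mu|^2&-2\Im(\mu+\nu)\\-2\Im(\mu-\nu)&|1+\mu|^2\end{bmatrix}-|\nu|^2 I\right),\quad \Delta_2=|1-\nu|^2-|\mu|^2.$$ Then $\Re(g)$ is a weak solution of $\mathrm{div}(B_{\mu,\nu}\nabla w)=0$ in $\Omega$ and $\Im(g)$ is a weak solution of $\mathrm{div}(\widetilde B_{\mu,\nu}\nabla w)=0$ in $\Omega$.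
   Context: $\bar\partial=\frac12(\partial_1+i\partial_2)$, $\partial=\frac12(\partial_1-i\partial_2)$; $I$ is the $2\times2$ identity matrix. *)

theory Defs
  imports "HOL-Analysis.Analysis"
begin

text \<open>The plane R^2 is identified with the complex numbers: x = x1 + i x2.
  Partial derivatives d_1, d_2 are directional derivatives in directions 1 and i.\<close>

definition pd :: "complex \<Rightarrow> (complex \<Rightarrow> real) \<Rightarrow> complex \<Rightarrow> real" where
  "pd v \<phi> x = frechet_derivative \<phi> (at x) v"

fun iter_pd :: "complex list \<Rightarrow> (complex \<Rightarrow> real) \<Rightarrow> complex \<Rightarrow> real" where
  "iter_pd [] \<phi> = \<phi>"
| "iter_pd (v # vs) \<phi> = pd v (iter_pd vs \<phi>)"

definition smooth_fun :: "(complex \<Rightarrow> real) \<Rightarrow> bool" where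
  "smooth_fun \<phi> \<longleftrightarrow> (\<forall>vs. iter_pd vs \<phi> differentiable_on UNIV)"

definition test_fun :: "complex set \<Rightarrow> (complex \<Rightarrow> real) \<Rightarrow> bool" where
  "test_fun \<Omega> \<phi> \<longleftrightarrow> smooth_fun \<phi> \<and> compact (closure {x. \<phi> x \<noteq> 0})
      \<and> closure {x. \<phi> x \<noteq> 0} \<subseteq> \<Omega>"

definition L2_loc :: "complex set \<Rightarrow> (complex \<Rightarrow> 'b::{banach,second_countable_topology}) \<Rightarrow> bool" where
  "L2_loc \<Omega> f \<longleftrightarrow> set_borel_measurable lborel \<Omega> f \<and>
     (\<forall>K. compact K \<and> K \<subseteq> \<Omega> \<longrightarrow> set_integrable lborel K (\<lambda>x. (norm (f x))\<^sup>2))"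

definition weak_pd :: "complex set \<Rightarrow> complex \<Rightarrow> (complex \<Rightarrow> 'b::{banach,second_countable_topology})
    \<Rightarrow> (complex \<Rightarrow> 'b) \<Rightarrow> bool" where
  "weak_pd \<Omega> v f h \<longleftrightarrow> (\<forall>\<phi>. test_fun \<Omega> \<phi> \<longrightarrow>
      (LINT x:\<Omega>|lborel. pd v \<phi> x *\<^sub>R f x) = - (LINT x:\<Omega>|lborel. \<phi> x *\<^sub>R h x))"

definition W12_loc :: "complex set \<Rightarrow> (complex \<Rightarrow> 'b::{banach,second_countable_topology})
    \<Rightarrow> (complex \<Rightarrow> 'b) \<Rightarrow> (complex \<Rightarrow> 'b) \<Rightarrow> bool" where
  "W12_loc \<Omega> f h1 h2 \<longleftrightarrow> L2_loc \<Omega> f \<and> L2_loc \<Omega> h1 \<and> L2_loc \<Omega> h2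
      \<and> weak_pd \<Omega> 1 f h1 \<and> weak_pd \<Omega> \<i> f h2"

definition weak_solution :: "complex set \<Rightarrow> (complex \<Rightarrow> real^2^2) \<Rightarrow> (complex \<Rightarrow> real) \<Rightarrow> bool" where
  "weak_solution \<Omega> B w \<longleftrightarrow> (\<exists>w1 w2. W12_loc \<Omega> w w1 w2 \<and>
     (\<forall>\<phi>. test_fun \<Omega> \<phi> \<longrightarrow>
        (let F = (\<lambda>x. (B x *v vector [w1 x, w2 x]) \<bullet> (vector [pd 1 \<phi> x, pd \<i> \<phi> x] :: real^2))
         in set_integrable lborel \<Omega> F \<and> (LINT x:\<Omega>|lborel. F x) = 0)))"

definition Bmat :: "(complex \<Rightarrow> complex) \<Rightarrow> (complex \<Rightarrow> complex) \<Rightarrow> complex \<Rightarrow> real^2^2" where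
  "Bmat \<mu> \<nu> x = (let m = \<mu> x; n = \<nu> x; \<Delta>1 = (cmod (1 + n))\<^sup>2 - (cmod m)\<^sup>2 in
     (1 / \<Delta>1) *\<^sub>R (vector [vector [(cmod (1 - m))\<^sup>2, - 2 * Im (m - n)],
                            vector [- 2 * Im (m + n), (cmod (1 + m))\<^sup>2]]
                    - (cmod n)\<^sup>2 *\<^sub>R mat 1))"

definition Btilde :: "(complex \<Rightarrow> complex) \<Rightarrow> (complex \<Rightarrow> complex) \<Rightarrow> complex \<Rightarrow> real^2^2" where
  "Btilde \<mu> \<nu> x = (let m = \<mu> x; n = \<nu> x; \<Delta>2 = (cmod (1 - n))\<^sup>2 - (cmod m)\<^sup>2 in
     (1 / \<Delta>2) *\<^sub>R (vector [vector [(cmod (1 - m))\<^sup>2, - 2 * Im (m + n)],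
                            vector [- 2 * Im (m - n), (cmod (1 + m))\<^sup>2]]
                    - (cmod n)\<^sup>2 *\<^sub>R mat 1))"

end

theory Submission
  imports Defs
begin

(* Write u = Re g, v = Im g, and d1, d2 for weak partial derivatives. Pointwise, the Beltrami
   equation is equivalent to  B grad u = (d2 v, - d1 v)  and to  Btilde grad v = (- d2 u, d1 u);
   the denominators \<Delta>1, \<Delta>2 are positive because |\<mu>| + |\<nu>| < 1. Tested against grad \<phi>, each
   right-hand side becomes the integral of  d2 w d1 \<phi> - d1 w d2 \<phi>  for some w in W^{1,2}_loc, and
   this vanishes: by definition of the weak derivatives both terms equal the integral of
   - w d1 d2 \<phi>, since the second derivatives of the smooth test function \<phi> commute. *)

lemma iter_pd_append: "iter_pd (vs @ [v]) f = iter_pd vs (pd v f)"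
  by (induction vs) auto

lemma smooth_fun_pd: "smooth_fun f \<Longrightarrow> smooth_fun (pd v f)"
  unfolding smooth_fun_def by (metis iter_pd_append)

lemma smooth_fun_differentiable: "smooth_fun f \<Longrightarrow> iter_pd vs f differentiable (at x)"
  unfolding smooth_fun_def differentiable_on_def by auto

lemma smooth_fun_continuous: "smooth_fun f \<Longrightarrow> continuous_on UNIV f"
  unfolding smooth_fun_def by (metis differentiable_imp_continuous_on iter_pd.simps(1))

lemma pd_eq_0_outside_support:
  assumes "x \<notin> closure {y. f y \<noteq> 0}"
  shows "pd v f x = 0"
proof -
  have "open (- closure {y. f y \<noteq> 0})" by auto
  then have "(f has_derivative (\<lambda>_. 0)) (at x)"
    by (rule has_derivative_transform_within_open[OF has_derivative_const])
      (use assms in \<open>auto intro: subsetD[OF closure_subset]\<close>)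
  then show ?thesis
    by (simp add: pd_def frechet_derivative_at[symmetric])
qed

lemma test_fun_pd:
  assumes "test_fun \<Omega> f"
  shows "test_fun \<Omega> (pd v f)"
proof -
  have "{x. pd v f x \<noteq> 0} \<subseteq> closure {x. f x \<noteq> 0}"
    using pd_eq_0_outside_support by blast
  then have supp: "closure {x. pd v f x \<noteq> 0} \<subseteq> closure {x. f x \<noteq> 0}"
    by (metis closure_closure closure_mono)
  then have "compact (closure {x. pd v f x \<noteq> 0})"
    using assms compact_Int_closed[OF _ closed_closure, of "closure {x. f x \<noteq> 0}" "{x. pd v f x \<noteq> 0}"]
    unfolding test_fun_def by (simp add: Int_absorb1)
  with assms supp show ?thesis
    unfolding test_fun_def using smooth_fun_pd by blast
qed

lemma has_real_derivative_pd_line: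
  assumes "f differentiable (at (y + t *\<^sub>R v))"
  shows "((\<lambda>s. f (y + s *\<^sub>R v)) has_real_derivative pd v f (y + t *\<^sub>R v)) (at t)"
proof -
  let ?D = "frechet_derivative f (at (y + t *\<^sub>R v))"
  have D: "(f has_derivative ?D) (at (y + t *\<^sub>R v))"
    using assms frechet_derivative_works by blast
  have "((\<lambda>s. y + s *\<^sub>R v) has_derivative (\<lambda>h. h *\<^sub>R v)) (at t)"
    by (auto intro!: derivative_eq_intros)
  from diff_chain_at[OF this D]
  have "((\<lambda>s. f (y + s *\<^sub>R v)) has_derivative (\<lambda>h. h * ?D v)) (at t)"
    using linear_scale[OF has_derivative_linear[OF D]] by (simp add: o_def)
  then show ?thesis
    by (simp add: has_field_derivative_def pd_def mult.commute[of _ "?D v"])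
qed

lemma second_difference_mvt:
  assumes f: "\<And>z. f differentiable (at z)" and fv: "\<And>z. pd v f differentiable (at z)"
    and "s > 0"
  obtains t r where "0 < t" "t < s" "0 < r" "r < s"
    "f (x + s *\<^sub>R v + s *\<^sub>R w) - f (x + s *\<^sub>R w) - f (x + s *\<^sub>R v) + f x
       = s * s * pd w (pd v f) (x + t *\<^sub>R v + r *\<^sub>R w)"
proof -
  have "((\<lambda>t. f (x + s *\<^sub>R w + t *\<^sub>R v) - f (x + t *\<^sub>R v)) has_real_derivative
      pd v f (x + s *\<^sub>R w + t *\<^sub>R v) - pd v f (x + t *\<^sub>R v)) (at t)" for t
    by (intro DERIV_diff has_real_derivative_pd_line f)
  from MVT2[OF \<open>s > 0\<close> this] obtain t where t: "0 < t" "t < s"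
    and eq_t: "f (x + s *\<^sub>R w + s *\<^sub>R v) - f (x + s *\<^sub>R v) - (f (x + s *\<^sub>R w) - f x)
        = s * (pd v f (x + s *\<^sub>R w + t *\<^sub>R v) - pd v f (x + t *\<^sub>R v))"
    by auto
  from MVT2[OF \<open>s > 0\<close> has_real_derivative_pd_line[where y = "x + t *\<^sub>R v" and v = w, OF fv]]
  obtain r where r: "0 < r" "r < s"
    and eq_r: "pd v f (x + t *\<^sub>R v + s *\<^sub>R w) - pd v f (x + t *\<^sub>R v)
        = s * pd w (pd v f) (x + t *\<^sub>R v + r *\<^sub>R w)"
    by auto
  have "x + s *\<^sub>R w + t *\<^sub>R v = x + t *\<^sub>R v + s *\<^sub>R w" "x + s *\<^sub>R w + s *\<^sub>R v = x + s *\<^sub>R v + s *\<^sub>R w"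
    by (simp_all add: algebra_simps)
  with eq_t eq_r have "f (x + s *\<^sub>R v + s *\<^sub>R w) - f (x + s *\<^sub>R w) - f (x + s *\<^sub>R v) + f x
       = s * s * pd w (pd v f) (x + t *\<^sub>R v + r *\<^sub>R w)"
    by (simp add: algebra_simps)
  with t r that show ?thesis by blast
qed

lemma pd_commute:
  assumes f: "\<And>z. f differentiable (at z)"
    and fv: "\<And>z. pd v f differentiable (at z)" and fw: "\<And>z. pd w f differentiable (at z)"
    and "continuous (at x) (pd w (pd v f))" "continuous (at x) (pd v (pd w f))"
  shows "pd w (pd v f) x = pd v (pd w f) x"
proof (rule ccontr)
  let ?A = "pd w (pd v f)" and ?B = "pd v (pd w f)"
  assume "?A x \<noteq> ?B x"
  define e where "e = \<bar>?A x - ?B x\<bar> / 2"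
  have "e > 0" using \<open>?A x \<noteq> ?B x\<close> by (simp add: e_def)
  with assms(4,5) obtain dA dB where "dA > 0" "dB > 0"
    and dA: "\<And>y. dist y x < dA \<Longrightarrow> dist (?A y) (?A x) < e"
    and dB: "\<And>y. dist y x < dB \<Longrightarrow> dist (?B y) (?B x) < e"
    unfolding continuous_at_eps_delta by metis
  define s where "s = min dA dB / (norm v + norm w + 1)"
  have N: "norm v + norm w + 1 > 0" by (simp add: add_nonneg_pos)
  then have "s > 0" using \<open>dA > 0\<close> \<open>dB > 0\<close> by (simp add: s_def)
  have near: "dist (x + t *\<^sub>R a + r *\<^sub>R b) x < min dA dB"
    if "0 < t" "t < s" "0 < r" "r < s" "{a, b} = {v, w}" for t r a b
  proof -
    have "dist (x + t *\<^sub>R a + r *\<^sub>R b) x \<le> t * norm a + r * norm b"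
      using that norm_triangle_ineq[of "t *\<^sub>R a" "r *\<^sub>R b"] by (simp add: dist_norm)
    also have "\<dots> \<le> s * (norm v + norm w)"
      using that mult_right_mono[of t s "norm a"] mult_right_mono[of r s "norm b"]
      by (auto simp: doubleton_eq_iff algebra_simps)
    also have "\<dots> < s * (norm v + norm w + 1)"
      using \<open>s > 0\<close> by simp
    also have "\<dots> = min dA dB"
      using N by (simp add: s_def)
    finally show ?thesis .
  qed
  \<comment> \<open>The second difference of f over the square spanned by s v and s w equals s * s times
    either mixed derivative, evaluated at some point near x.\<close>
  obtain t1 r1 where tr1: "0 < t1" "t1 < s" "0 < r1" "r1 < s"
    and A: "f (x + s *\<^sub>R v + s *\<^sub>R w) - f (x + s *\<^sub>R w) - f (x + s *\<^sub>R v) + f x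
       = s * s * ?A (x + t1 *\<^sub>R v + r1 *\<^sub>R w)"
    using second_difference_mvt[OF f fv \<open>s > 0\<close>] by blast
  obtain t2 r2 where tr2: "0 < t2" "t2 < s" "0 < r2" "r2 < s"
    and B: "f (x + s *\<^sub>R w + s *\<^sub>R v) - f (x + s *\<^sub>R v) - f (x + s *\<^sub>R w) + f x
       = s * s * ?B (x + t2 *\<^sub>R w + r2 *\<^sub>R v)"
    using second_difference_mvt[OF f fw \<open>s > 0\<close>] by blast
  have "s * s * ?A (x + t1 *\<^sub>R v + r1 *\<^sub>R w) = s * s * ?B (x + t2 *\<^sub>R w + r2 *\<^sub>R v)"
    using A B unfolding add.assoc[of x] add.commute[of "s *\<^sub>R w"] by linarith
  then have "?A (x + t1 *\<^sub>R v + r1 *\<^sub>R w) = ?B (x + t2 *\<^sub>R w + r2 *\<^sub>R v)"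
    using \<open>s > 0\<close> by simp
  moreover have "dist (?A (x + t1 *\<^sub>R v + r1 *\<^sub>R w)) (?A x) < e"
    using dA near[OF tr1] by auto
  moreover have "dist (?B (x + t2 *\<^sub>R w + r2 *\<^sub>R v)) (?B x) < e"
    using dB near[OF tr2] by (auto simp: insert_commute)
  ultimately show False
    unfolding e_def dist_real_def by (simp add: abs_if split: if_splits)
qed

lemma smooth_fun_pd_commute: "smooth_fun f \<Longrightarrow> pd w (pd v f) = pd v (pd w f)"
  using pd_commute smooth_fun_differentiable[of f "[]"] smooth_fun_differentiable[of f "[v]"]
    smooth_fun_differentiable[of f "[w]"] smooth_fun_differentiable[of f "[w, v]"]
    smooth_fun_differentiable[of f "[v, w]"]
  by (auto simp: differentiable_imp_continuous_within)

lemma L2_loc_set_integrable: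
  assumes h: "L2_loc \<Omega> h" and K: "compact K" "K \<subseteq> \<Omega>"
  shows "set_integrable lborel K h"
proof (rule set_integrable_bound)
  have "set_integrable lborel K (\<lambda>_. 1::real)"
    using borel_integrable_compact[OF K(1) continuous_on_const, of "1::real"]
    by (simp add: set_integrable_def)
  moreover have "set_integrable lborel K (\<lambda>x. (norm (h x))\<^sup>2)"
    using h K by (simp add: L2_loc_def)
  ultimately show "set_integrable lborel K (\<lambda>x. 1 + (norm (h x))\<^sup>2)"
    by (rule set_integral_add)
  show "set_borel_measurable lborel K h"
    using h K(2) compact_imp_closed[OF K(1)] unfolding L2_loc_def
    by (auto intro: set_borel_measurable_subset)
  have "t \<le> 1 + t\<^sup>2" for t :: real
    using zero_le_power2[of "t - 1/2"] by (simp add: power2_eq_square algebra_simps)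
  then show "AE x in lborel. x \<in> K \<longrightarrow> norm (h x) \<le> norm (1 + (norm (h x))\<^sup>2)"
    by auto
qed

lemma test_fun_set_integrable:
  assumes "test_fun \<Omega> \<phi>" and h: "L2_loc \<Omega> h"
  shows "set_integrable lborel \<Omega> (\<lambda>x. \<phi> x *\<^sub>R h x)"
proof -
  define K where "K = closure {x. \<phi> x \<noteq> 0}"
  have K: "compact K" "K \<subseteq> \<Omega>" and "smooth_fun \<phi>"
    using assms unfolding test_fun_def K_def by auto
  from \<open>smooth_fun \<phi>\<close> have cont: "continuous_on UNIV \<phi>"
    by (rule smooth_fun_continuous)
  have "bounded (\<phi> ` K)"
    using compact_continuous_image[OF continuous_on_subset[OF cont subset_UNIV] K(1)]
    by (rule compact_imp_bounded)
  then obtain B where B: "\<And>x. x \<in> K \<Longrightarrow> norm (\<phi> x) \<le> B"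
    unfolding bounded_iff by blast
  have outside: "\<phi> x = 0" if "x \<notin> K" for x
    using that unfolding K_def by (meson closure_subset mem_Collect_eq subsetD)
  show ?thesis
  proof (rule set_integrable_bound)
    have "(\<lambda>x. indicator \<Omega> x *\<^sub>R (B *\<^sub>R (indicator K x *\<^sub>R h x)))
        = (\<lambda>x. B *\<^sub>R (indicator K x *\<^sub>R h x))"
      using K(2) by (intro ext) (auto simp: indicator_def)
    then show "set_integrable lborel \<Omega> (\<lambda>x. B *\<^sub>R (indicator K x *\<^sub>R h x))"
      using integrable_scaleR_right[of B, OF L2_loc_set_integrable[OF h K, unfolded set_integrable_def]]
      by (simp add: set_integrable_def)
    have "\<phi> \<in> borel_measurable lborel"
      using cont by (simp add: borel_measurable_continuous_onI)
    moreover have "(\<lambda>x. indicator \<Omega> x *\<^sub>R h x) \<in> borel_measurable lborel"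
      using h unfolding L2_loc_def set_borel_measurable_def by (rule conjunct1)
    ultimately have "(\<lambda>x. \<phi> x *\<^sub>R (indicator \<Omega> x *\<^sub>R h x)) \<in> borel_measurable lborel"
      by (rule borel_measurable_scaleR)
    then show "set_borel_measurable lborel \<Omega> (\<lambda>x. \<phi> x *\<^sub>R h x)"
      unfolding set_borel_measurable_def by (simp add: mult.commute)
    have "norm (\<phi> x *\<^sub>R h x) \<le> norm (B *\<^sub>R (indicator K x *\<^sub>R h x))" for x
    proof (cases "x \<in> K")
      case True
      then have "norm (\<phi> x *\<^sub>R h x) \<le> B * norm (h x)"
        using B by (simp add: mult_right_mono)
      also have "\<dots> \<le> norm (B *\<^sub>R (indicator K x *\<^sub>R h x))"
        using True by (simp add: mult_right_mono)
      finally show ?thesis .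
    qed (simp add: outside)
    then show "AE x in lborel. x \<in> \<Omega> \<longrightarrow> norm (\<phi> x *\<^sub>R h x) \<le> norm (B *\<^sub>R (indicator K x *\<^sub>R h x))"
      by simp
  qed
qed

lemma set_integral_bounded_linear:
  assumes "bounded_linear T" and "set_integrable M A f"
  shows "(LINT x:A|M. T (f x)) = T (LINT x:A|M. f x)"
  using integral_bounded_linear[OF assms(1) assms(2)[unfolded set_integrable_def]]
  by (simp add: set_lebesgue_integral_def linear_simps[OF assms(1)])

lemma L2_loc_bounded_linear:
  fixes T :: "'b::{banach,second_countable_topology} \<Rightarrow> 'c::{banach,second_countable_topology}"
  assumes T: "bounded_linear T" and h: "L2_loc \<Omega> h"
  shows "L2_loc \<Omega> (\<lambda>x. T (h x))"
proof -
  obtain C where C: "\<And>y. norm (T y) \<le> norm y * C" and "C \<ge> 0"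
    using bounded_linear.nonneg_bounded[OF T] by blast
  have "(\<lambda>x. T (indicator \<Omega> x *\<^sub>R h x)) \<in> borel_measurable lborel"
    using h unfolding L2_loc_def set_borel_measurable_def
    by (intro measurable_compose[OF _ borel_measurable_continuous_onI[OF linear_continuous_on[OF T]]]) auto
  then have meas: "set_borel_measurable lborel \<Omega> (\<lambda>x. T (h x))"
    unfolding set_borel_measurable_def by (simp add: linear_simps[OF T])
  have "set_integrable lborel K (\<lambda>x. (norm (T (h x)))\<^sup>2)" if K: "compact K" "K \<subseteq> \<Omega>" for K
  proof (rule set_integrable_bound)
    show "set_integrable lborel K (\<lambda>x. C\<^sup>2 * (norm (h x))\<^sup>2)"
      using h K unfolding L2_loc_def by (intro set_integrable_mult_right) auto
    have "K \<in> sets lborel"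
      using K(1) by (simp add: compact_imp_closed)
    then have [measurable]: "(\<lambda>x. indicator K x *\<^sub>R T (h x)) \<in> borel_measurable lborel"
      using set_borel_measurable_subset[OF meas _ K(2)] unfolding set_borel_measurable_def by blast
    have "(\<lambda>x. indicator K x *\<^sub>R (norm (T (h x)))\<^sup>2) = (\<lambda>x. (norm (indicator K x *\<^sub>R T (h x)))\<^sup>2)"
      by (auto simp: indicator_def)
    then show "set_borel_measurable lborel K (\<lambda>x. (norm (T (h x)))\<^sup>2)"
      unfolding set_borel_measurable_def by (simp only:) measurable
    have "(norm (T y))\<^sup>2 \<le> C\<^sup>2 * (norm y)\<^sup>2" for y
      using power_mono[OF C[of y] norm_ge_zero, of 2] by (simp add: power_mult_distrib mult.commute)
    then show "AE x in lborel. x \<in> K \<longrightarrow> norm ((norm (T (h x)))\<^sup>2) \<le> norm (C\<^sup>2 * (norm (h x))\<^sup>2)"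
      by simp
  qed
  with meas show ?thesis
    unfolding L2_loc_def by blast
qed

lemma weak_pd_bounded_linear:
  assumes T: "bounded_linear T" and "weak_pd \<Omega> v f h" "L2_loc \<Omega> f" "L2_loc \<Omega> h"
  shows "weak_pd \<Omega> v (\<lambda>x. T (f x)) (\<lambda>x. T (h x))"
  unfolding weak_pd_def
proof (intro allI impI)
  fix \<phi> assume \<phi>: "test_fun \<Omega> \<phi>"
  have "(LINT x:\<Omega>|lborel. pd v \<phi> x *\<^sub>R T (f x)) = T (LINT x:\<Omega>|lborel. pd v \<phi> x *\<^sub>R f x)"
    using set_integral_bounded_linear[OF T test_fun_set_integrable[OF test_fun_pd[OF \<phi>] assms(3)]]
    by (simp add: linear_simps[OF T])
  also have "\<dots> = - T (LINT x:\<Omega>|lborel. \<phi> x *\<^sub>R h x)"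
    using assms(2) \<phi> unfolding weak_pd_def by (simp add: linear_simps[OF T])
  also have "\<dots> = - (LINT x:\<Omega>|lborel. \<phi> x *\<^sub>R T (h x))"
    using set_integral_bounded_linear[OF T test_fun_set_integrable[OF \<phi> assms(4)]]
    by (simp add: linear_simps[OF T])
  finally show "(LINT x:\<Omega>|lborel. pd v \<phi> x *\<^sub>R T (f x)) = - (LINT x:\<Omega>|lborel. \<phi> x *\<^sub>R T (h x))" .
qed

lemma W12_loc_bounded_linear:
  assumes "bounded_linear T" and "W12_loc \<Omega> f h1 h2"
  shows "W12_loc \<Omega> (\<lambda>x. T (f x)) (\<lambda>x. T (h1 x)) (\<lambda>x. T (h2 x))"
  using assms L2_loc_bounded_linear weak_pd_bounded_linear unfolding W12_loc_def by blast

lemma weak_pd_commute: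
  assumes "weak_pd \<Omega> v g gv" "weak_pd \<Omega> w g gw" and "test_fun \<Omega> \<phi>"
  shows "(LINT x:\<Omega>|lborel. pd v \<phi> x *\<^sub>R gw x) = (LINT x:\<Omega>|lborel. pd w \<phi> x *\<^sub>R gv x)"
proof -
  have "pd w (pd v \<phi>) = pd v (pd w \<phi>)"
    using assms(3) smooth_fun_pd_commute unfolding test_fun_def by blast
  moreover have "(LINT x:\<Omega>|lborel. pd w (pd v \<phi>) x *\<^sub>R g x) = - (LINT x:\<Omega>|lborel. pd v \<phi> x *\<^sub>R gw x)"
    using assms(2) test_fun_pd[OF assms(3)] unfolding weak_pd_def by blast
  moreover have "(LINT x:\<Omega>|lborel. pd v (pd w \<phi>) x *\<^sub>R g x) = - (LINT x:\<Omega>|lborel. pd w \<phi> x *\<^sub>R gv x)"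
    using assms(1) test_fun_pd[OF assms(3)] unfolding weak_pd_def by blast
  ultimately show ?thesis
    by simp
qed

lemma matrix_vector_inner_2:
  "((A :: real^2^2) *v vector [a, b]) \<bullet> (vector [p, q] :: real^2)
     = (A $ 1 $ 1 * a + A $ 1 $ 2 * b) * p + (A $ 2 $ 1 * a + A $ 2 $ 2 * b) * q"
  by (simp add: matrix_vector_mult_def inner_vec_def sum_2)

lemma set_borel_measurable_iff_restrict_space:
  fixes f :: "'a \<Rightarrow> 'b::real_normed_vector"
  assumes "\<Omega> \<in> sets M"
  shows "set_borel_measurable M \<Omega> f \<longleftrightarrow> f \<in> borel_measurable (restrict_space M \<Omega>)"
  using assms by (simp add: set_borel_measurable_def borel_measurable_restrict_space_iff)

lemma weak_solution_if_conjugate: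
  fixes B :: "complex \<Rightarrow> real^2^2" and u v u1 u2 v1 v2 :: "complex \<Rightarrow> real"
  assumes "open \<Omega>" and u: "W12_loc \<Omega> u u1 u2" and v: "W12_loc \<Omega> v v1 v2"
    and B: "\<And>i j. set_borel_measurable lborel \<Omega> (\<lambda>x. B x $ i $ j)"
    and conj: "AE x in lborel. x \<in> \<Omega> \<longrightarrow> B x *v vector [u1 x, u2 x] = vector [v2 x, - v1 x]"
  shows "weak_solution \<Omega> B u"
  unfolding weak_solution_def Let_def
proof (intro exI conjI allI impI)
  show "W12_loc \<Omega> u u1 u2" by fact
  fix \<phi> assume \<phi>: "test_fun \<Omega> \<phi>"
  let ?M = "restrict_space lborel \<Omega>"
  have \<Omega>: "\<Omega> \<in> sets lborel" "\<Omega> \<inter> space lborel \<in> sets lborel"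
    using \<open>open \<Omega>\<close> by simp_all
  define F where "F x = (B x *v vector [u1 x, u2 x]) \<bullet> (vector [pd 1 \<phi> x, pd \<i> \<phi> x] :: real^2)" for x
  define G where "G x = pd 1 \<phi> x *\<^sub>R v2 x - pd \<i> \<phi> x *\<^sub>R v1 x" for x
  have v1: "set_integrable lborel \<Omega> (\<lambda>x. pd \<i> \<phi> x *\<^sub>R v1 x)"
    and v2: "set_integrable lborel \<Omega> (\<lambda>x. pd 1 \<phi> x *\<^sub>R v2 x)"
    using v test_fun_set_integrable[OF test_fun_pd[OF \<phi>]] unfolding W12_loc_def by blast+
  have G: "integrable ?M G"
    using set_integral_diff(1)[OF v2 v1] unfolding G_def set_integrable_eq[OF \<Omega>(2)] .
  have "integral\<^sup>L ?M G = 0"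
    using set_integral_diff(2)[OF v2 v1] weak_pd_commute[OF _ _ \<phi>, of 1 v v1 \<i> v2] v
    unfolding G_def W12_loc_def set_lebesgue_integral_def integral_restrict_space[OF \<Omega>(2)] by simp
  have [measurable]: "(\<lambda>x. B x $ i $ j) \<in> borel_measurable ?M" for i j
    using B set_borel_measurable_iff_restrict_space[OF \<Omega>(1)] by blast
  have [measurable]: "u1 \<in> borel_measurable ?M" "u2 \<in> borel_measurable ?M"
    using u set_borel_measurable_iff_restrict_space[OF \<Omega>(1)] unfolding W12_loc_def L2_loc_def by auto
  have [measurable]: "pd w \<phi> \<in> borel_measurable ?M" for w
    using test_fun_pd[OF \<phi>] smooth_fun_continuous unfolding test_fun_def
    by (intro measurable_restrict_space1) (auto intro: borel_measurable_continuous_onI)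
  have F: "F \<in> borel_measurable ?M"
    unfolding F_def matrix_vector_inner_2 by measurable
  have "AE x in ?M. G x = F x"
    unfolding AE_restrict_space_iff[OF \<Omega>(2)] using conj
    by eventually_elim (simp add: F_def G_def inner_vec_def sum_2 mult.commute)
  with \<open>integral\<^sup>L ?M G = 0\<close> have "integrable ?M F" "integral\<^sup>L ?M F = 0"
    using integrable_cong_AE_imp[OF G F] integral_cong_AE[OF borel_measurable_integrable[OF G] F]
    by auto
  then show "set_integrable lborel \<Omega> F" "(LINT x:\<Omega>|lborel. F x) = 0"
    unfolding set_integrable_eq[OF \<Omega>(2)] set_lebesgue_integral_def integral_restrict_space[OF \<Omega>(2), symmetric] .
qed

lemma beltrami_real_identities:
  fixes m n a b :: complex
  assumes E: "(a + \<i> * b) / 2 = m * ((a - \<i> * b) / 2) + n * cnj ((a - \<i> * b) / 2)"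
  shows "((cmod (1 - m))\<^sup>2 - (cmod n)\<^sup>2) * Re a + - 2 * Im (m - n) * Re b
           = ((cmod (1 + n))\<^sup>2 - (cmod m)\<^sup>2) * Im b"
    and "- 2 * Im (m + n) * Re a + ((cmod (1 + m))\<^sup>2 - (cmod n)\<^sup>2) * Re b
           = - ((cmod (1 + n))\<^sup>2 - (cmod m)\<^sup>2) * Im a"
    and "((cmod (1 - m))\<^sup>2 - (cmod n)\<^sup>2) * Im a + - 2 * Im (m + n) * Im b
           = - ((cmod (1 - n))\<^sup>2 - (cmod m)\<^sup>2) * Re b"
    and "- 2 * Im (m - n) * Im a + ((cmod (1 + m))\<^sup>2 - (cmod n)\<^sup>2) * Im b
           = ((cmod (1 - n))\<^sup>2 - (cmod m)\<^sup>2) * Re a"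
proof -
  have re: "Re a - Im b = Re m * (Re a + Im b) - Im m * (Im a - Re b) + Re n * (Re a + Im b) + Im n * (Im a - Re b)"
   and im: "Im a + Re b = Re m * (Im a - Re b) + Im m * (Re a + Im b) - Re n * (Im a - Re b) + Im n * (Re a + Im b)"
    using arg_cong[OF E, of "\<lambda>z. 2 * Re z"] arg_cong[OF E, of "\<lambda>z. 2 * Im z"]
    by (simp_all add: field_simps)
  show "((cmod (1 - m))\<^sup>2 - (cmod n)\<^sup>2) * Re a + - 2 * Im (m - n) * Re b
           = ((cmod (1 + n))\<^sup>2 - (cmod m)\<^sup>2) * Im b"
    unfolding cmod_power2 using re im by simp algebra
  show "- 2 * Im (m + n) * Re a + ((cmod (1 + m))\<^sup>2 - (cmod n)\<^sup>2) * Re b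
           = - ((cmod (1 + n))\<^sup>2 - (cmod m)\<^sup>2) * Im a"
    unfolding cmod_power2 using re im by simp algebra
  show "((cmod (1 - m))\<^sup>2 - (cmod n)\<^sup>2) * Im a + - 2 * Im (m + n) * Im b
           = - ((cmod (1 - n))\<^sup>2 - (cmod m)\<^sup>2) * Re b"
    unfolding cmod_power2 using re im by simp algebra
  show "- 2 * Im (m - n) * Im a + ((cmod (1 + m))\<^sup>2 - (cmod n)\<^sup>2) * Im b
           = ((cmod (1 - n))\<^sup>2 - (cmod m)\<^sup>2) * Re a"
    unfolding cmod_power2 using re im by simp algebra
qed

lemma cmod_sq_less_cmod_one_pm_sq:
  fixes m n :: complex
  assumes "cmod m + cmod n < 1"
  shows "(cmod m)\<^sup>2 < (cmod (1 + n))\<^sup>2" "(cmod m)\<^sup>2 < (cmod (1 - n))\<^sup>2"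
proof -
  have "cmod m < cmod (1 + n)" "cmod m < cmod (1 - n)"
    using norm_triangle_ineq4[of "1 + n" n] norm_triangle_ineq[of "1 - n" n] assms by simp_all
  then show "(cmod m)\<^sup>2 < (cmod (1 + n))\<^sup>2" "(cmod m)\<^sup>2 < (cmod (1 - n))\<^sup>2"
    by (simp_all add: power_strict_mono)
qed

lemma mat2_mult_vector:
  "(r *\<^sub>R (vector [vector [a11, a12], vector [a21, a22]] - s *\<^sub>R mat 1) :: real^2^2) *v vector [x, y]
     = vector [r * ((a11 - s) * x + a12 * y), r * (a21 * x + (a22 - s) * y)]"
  by (simp add: vec_eq_iff forall_2 matrix_vector_mult_def sum_2 mat_def algebra_simps)

lemma Bmat_mult_gradient:
  assumes "cmod (\<mu> x) + cmod (\<nu> x) < 1"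
    and "(a + \<i> * b) / 2 = \<mu> x * ((a - \<i> * b) / 2) + \<nu> x * cnj ((a - \<i> * b) / 2)"
  shows "Bmat \<mu> \<nu> x *v vector [Re a, Re b] = vector [Im b, - Im a]"
proof -
  define \<Delta> where "\<Delta> = (cmod (1 + \<nu> x))\<^sup>2 - (cmod (\<mu> x))\<^sup>2"
  have "\<Delta> \<noteq> 0"
    using cmod_sq_less_cmod_one_pm_sq(1)[OF assms(1)] unfolding \<Delta>_def by linarith
  then show ?thesis
    unfolding Bmat_def Let_def mat2_mult_vector beltrami_real_identities(1,2)[OF assms(2)] \<Delta>_def[symmetric]
    by simp
qed

lemma Btilde_mult_gradient:
  assumes "cmod (\<mu> x) + cmod (\<nu> x) < 1"
    and "(a + \<i> * b) / 2 = \<mu> x * ((a - \<i> * b) / 2) + \<nu> x * cnj ((a - \<i> * b) / 2)"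
  shows "Btilde \<mu> \<nu> x *v vector [Im a, Im b] = vector [- Re b, Re a]"
proof -
  define \<Delta> where "\<Delta> = (cmod (1 - \<nu> x))\<^sup>2 - (cmod (\<mu> x))\<^sup>2"
  have "\<Delta> \<noteq> 0"
    using cmod_sq_less_cmod_one_pm_sq(2)[OF assms(1)] unfolding \<Delta>_def by linarith
  then show ?thesis
    unfolding Btilde_def Let_def mat2_mult_vector beltrami_real_identities(3,4)[OF assms(2)] \<Delta>_def[symmetric]
    by simp
qed

lemma Bmat_Btilde_entries_measurable:
  assumes \<Omega>: "\<Omega> \<in> sets lborel"
    and "set_borel_measurable lborel \<Omega> \<mu>" "set_borel_measurable lborel \<Omega> \<nu>"
  shows "set_borel_measurable lborel \<Omega> (\<lambda>x. Bmat \<mu> \<nu> x $ i $ j)"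
    and "set_borel_measurable lborel \<Omega> (\<lambda>x. Btilde \<mu> \<nu> x $ i $ j)"
proof -
  have [measurable]: "\<mu> \<in> borel_measurable (restrict_space lborel \<Omega>)" "\<nu> \<in> borel_measurable (restrict_space lborel \<Omega>)"
    using assms set_borel_measurable_iff_restrict_space[OF \<Omega>] by blast+
  show "set_borel_measurable lborel \<Omega> (\<lambda>x. Bmat \<mu> \<nu> x $ i $ j)"
    unfolding set_borel_measurable_iff_restrict_space[OF \<Omega>]
    using exhaust_2[of i] exhaust_2[of j]
    by (elim disjE; simp add: Bmat_def Let_def mat_def; measurable)
  show "set_borel_measurable lborel \<Omega> (\<lambda>x. Btilde \<mu> \<nu> x $ i $ j)"
    unfolding set_borel_measurable_iff_restrict_space[OF \<Omega>]
    using exhaust_2[of i] exhaust_2[of j]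
    by (elim disjE; simp add: Btilde_def Let_def mat_def; measurable)
qed

theorem lemma4:
  fixes \<Omega> :: "complex set" and g g1 g2 \<mu> \<nu> :: "complex \<Rightarrow> complex" and \<kappa> :: real
  assumes "open \<Omega>"
    and "W12_loc \<Omega> g g1 g2"
    and "set_borel_measurable lborel \<Omega> \<mu>" and "set_borel_measurable lborel \<Omega> \<nu>"
    and "\<exists>C. AE x in lborel. x \<in> \<Omega> \<longrightarrow> cmod (\<mu> x) \<le> C \<and> cmod (\<nu> x) \<le> C"
    and "AE x in lborel. x \<in> \<Omega> \<longrightarrow> cmod (\<mu> x) + cmod (\<nu> x) \<le> \<kappa>"
    and "\<kappa> < 1"
    and "AE x in lborel. x \<in> \<Omega> \<longrightarrow>
           (g1 x + \<i> * g2 x) / 2 = \<mu> x * ((g1 x - \<i> * g2 x) / 2) + \<nu> x * cnj ((g1 x - \<i> * g2 x) / 2)"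
  shows "weak_solution \<Omega> (Bmat \<mu> \<nu>) (\<lambda>x. Re (g x)) \<and> weak_solution \<Omega> (Btilde \<mu> \<nu>) (\<lambda>x. Im (g x))"
proof -
  have "\<Omega> \<in> sets lborel"
    using \<open>open \<Omega>\<close> by simp
  note entries = Bmat_Btilde_entries_measurable[OF this assms(3,4)]
  have beltrami: "AE x in lborel. x \<in> \<Omega> \<longrightarrow> cmod (\<mu> x) + cmod (\<nu> x) < 1 \<and>
      (g1 x + \<i> * g2 x) / 2 = \<mu> x * ((g1 x - \<i> * g2 x) / 2) + \<nu> x * cnj ((g1 x - \<i> * g2 x) / 2)"
    using assms(6,8) by eventually_elim (use \<open>\<kappa> < 1\<close> in auto)
  note W12_loc_bounded_linear[OF _ assms(2)]
  from this[OF bounded_linear_Re] this[OF bounded_linear_Im] this[OF bounded_linear_minus[OF bounded_linear_Re]]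
  have Re: "W12_loc \<Omega> (\<lambda>x. Re (g x)) (\<lambda>x. Re (g1 x)) (\<lambda>x. Re (g2 x))"
    and Im: "W12_loc \<Omega> (\<lambda>x. Im (g x)) (\<lambda>x. Im (g1 x)) (\<lambda>x. Im (g2 x))"
    and minus_Re: "W12_loc \<Omega> (\<lambda>x. - Re (g x)) (\<lambda>x. - Re (g1 x)) (\<lambda>x. - Re (g2 x))" .
  have "AE x in lborel. x \<in> \<Omega> \<longrightarrow> Bmat \<mu> \<nu> x *v vector [Re (g1 x), Re (g2 x)] = vector [Im (g2 x), - Im (g1 x)]"
    using beltrami by eventually_elim (blast intro: Bmat_mult_gradient)
  then have "weak_solution \<Omega> (Bmat \<mu> \<nu>) (\<lambda>x. Re (g x))"
    by (rule weak_solution_if_conjugate[OF \<open>open \<Omega>\<close> Re Im entries(1)])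
  moreover have "AE x in lborel. x \<in> \<Omega> \<longrightarrow>
      Btilde \<mu> \<nu> x *v vector [Im (g1 x), Im (g2 x)] = vector [- Re (g2 x), - (- Re (g1 x))]"
    using beltrami by eventually_elim (auto intro: Btilde_mult_gradient)
  then have "weak_solution \<Omega> (Btilde \<mu> \<nu>) (\<lambda>x. Im (g x))"
    by (rule weak_solution_if_conjugate[OF \<open>open \<Omega>\<close> Im minus_Re entries(2)])
  ultimately show ?thesis ..
qed

end
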